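(* Let $X$ be a real Banach space, $I=\{1,\ldots,m\}$, $J=\{1,\ldots,l\}$, $f_i,g_j\colon X\to\mathbb{R}$, $M=\{x\in X\mid f_i(x)=0\ \forall i\in I,\ g_j(x)\le0\ \forall j\in J\}$, $\overline{x}\in M$, and $J(\overline{x})=\{j\in J\mid g_j(\overline{x})=0\}$. Let the functions $f_i$, $i\in I$, and $g_j$, $j\in J(\overline{x})$, be quasidifferentiable at $\overline{x}$ with given quasidifferentials, and let $x_i^*\in\underline{\partial} f_i(\overline{x})$, $y_i^*\in\overline{\partial} f_i(\overline{x})$, $i\in I$, and $z_j^*\in\overline{\partial} g_j(\overline{x})$, $j\in J(\overline{x})$, be given. Put $C_i=(\underline{\partial} f_i(\overline{x})+y_i^* )\cup(-x_i^*-\overline{\partial} f_i(\overline{x}))$, $i\in I$. Then the following three conditions (1) for any $i\in I$ there exists $v_i\in X$ such that $s(\underline{\partial} f_i(\overline{x})+y_i^*,v_i)<0$ and for any $k\ne i$, $s(\underline{\partial} f_k(\overline{x})+y_k^*,v_i)\le 0$ and $s(-x_k^*-\overline{\partial} f_k(\overline{x}),v_i)\le0$; (2) for any $i\in I$ there exists $w_i\in X$ such that $s(-x_i^*-\overline{\partial} f_i(\overline{x}),w_i)<0$ and for any $k\ne i$, $s(-x_k^*-\overline{\partial} f_k(\overline{x}),w_i)\le0$ and $s(\underline{\partial} f_k(\overline{x})+y_k^*,w_i)\le0$; (3) there exists $v_0\in X$ with $s(\underline{\partial} g_j(\overline{x})+z_j^*,v_0)<0$ for all $j\in J(\overline{x})$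 and $s(\underline{\partial} f_i(\overline{x})+y_i^*,v_0)\le0$, $s(-x_i^*-\overline{\partial} f_i(\overline{x}),v_0)\le0$ for all $i\in I$; are all satisfied if and only if $$C_i\cap\operatorname{cl}^*\operatorname{cone}\{-C_k\mid k\ne i\}=\emptyset\quad\forall i\in I$$ and $$\operatorname{co}\{\underline{\partial} g_j(\overline{x})+z_j^*\mid j\in J(\overline{x})\}\cap\operatorname{cl}^*\operatorname{cone}\{-C_i\mid i\in I\}=\emptyset.$$
   Context: $X^*$ is the dual of $X$ with pairing $\langle\cdot,\cdot\rangle$; $\operatorname{cl}^*$ is closure in the weak$^*$ topology. A function $f$ is quasidifferentiable at $x$ if the directional derivative $f'(x,v)=\lim_{\alpha\to+0}(f(x+\alpha v)-f(x))/\alpha$ exists and is finite for all $v$ and there is a pair $[\underline{\partial} f(x),\overline{\partial} f(x)]$ of convex weak$^*$ compact subsets of $X^*$ with $f'(x,v)=\max_{x^*\in\underline{\partial} f(x)}\langle x^*,v\rangle+\min_{y^*\in\overline{\partial} f(x)}\langle y^*,v\rangle$ for all $v$; a specific such pair is fixed for each function. $s(C,v)=\sup_{x^*\in C}\langle x^*,v\rangle$. For $A$ a subset of a real vector space, $\operatorname{cone}A$ is the set of all finite combinations $\sum\lambda_ix_i$ with $x_i\in A$, $\lambda_i\ge0$; for a family of sets, $\operatorname{cone}\{A_k\}$ means the cone of their union; $\operatorname{co}$ denotes convex hull (of the union of the listed sets). *)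

theory Defs
  imports "HOL-Analysis.Analysis"
begin

text \<open>The dual space X* is represented as the set of bounded linear functionals
  'a => real; the pairing <x*, v> is application x* v.  The weak* topology on X*
  is the subspace topology induced by the product (pointwise convergence)
  topology on the function type 'a => real.\<close>

definition dual_space :: "('a::real_normed_vector \<Rightarrow> real) set" where
  "dual_space = {\<phi>. bounded_linear \<phi>}"

definition wstar_closure :: "('a::real_normed_vector \<Rightarrow> real) set \<Rightarrow> ('a \<Rightarrow> real) set" where
  "wstar_closure S = closure S \<inter> dual_space"

definition wstar_convex_compact :: "('a::real_normed_vector \<Rightarrow> real) set \<Rightarrow> bool" where
  "wstar_convex_compact K \<longleftrightarrow> K \<subseteq> dual_space \<and> compact K \<and>
     (\<forall>\<phi>\<in>K. \<forall>\<psi>\<in>K. \<forall>t::real. 0 \<le> t \<and> t \<le> 1 \<longrightarrow> (\<lambda>v. t * \<phi> v + (1 - t) * \<psi> v) \<in> K)"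

definition support_fun :: "('a \<Rightarrow> real) set \<Rightarrow> 'a \<Rightarrow> real" where
  "support_fun C v = (SUP \<phi>\<in>C. \<phi> v)"

text \<open>f is quasidifferentiable at x with quasidifferential [Dl, Du]:
  the directional derivative f'(x,v) exists, is finite, and equals
  max over Dl + min over Du (written Sup/Inf: the sets are nonempty and
  weak* compact, so these are attained).\<close>
definition quasidifferentiable_with ::
  "('a::real_normed_vector \<Rightarrow> real) \<Rightarrow> 'a \<Rightarrow> ('a \<Rightarrow> real) set \<Rightarrow> ('a \<Rightarrow> real) set \<Rightarrow> bool" where
  "quasidifferentiable_with f x Dl Du \<longleftrightarrow>
     wstar_convex_compact Dl \<and> wstar_convex_compact Du \<and> Dl \<noteq> {} \<and> Du \<noteq> {} \<and>
     (\<forall>v. ((\<lambda>\<alpha>. (f (x + \<alpha> *\<^sub>R v) - f x) / \<alpha>) \<longlongrightarrow>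
            ((SUP \<phi>\<in>Dl. \<phi> v) + (INF \<psi>\<in>Du. \<psi> v))) (at_right 0))"

definition shift_set :: "('a \<Rightarrow> real) set \<Rightarrow> ('a \<Rightarrow> real) \<Rightarrow> ('a \<Rightarrow> real) set" where
  "shift_set D y = (\<lambda>\<phi> v. \<phi> v + y v) ` D"

definition neg_shift_set :: "('a \<Rightarrow> real) \<Rightarrow> ('a \<Rightarrow> real) set \<Rightarrow> ('a \<Rightarrow> real) set" where
  "neg_shift_set x D = (\<lambda>\<psi> v. - x v - \<psi> v) ` D"

definition neg_set :: "('a \<Rightarrow> real) set \<Rightarrow> ('a \<Rightarrow> real) set" where
  "neg_set C = (\<lambda>\<phi> v. - \<phi> v) ` C"

definition cone_gen :: "('a \<Rightarrow> real) set \<Rightarrow> ('a \<Rightarrow> real) set" where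
  "cone_gen A = {\<phi>. \<exists>F c. finite F \<and> F \<subseteq> A \<and> (\<forall>\<psi>\<in>F. 0 \<le> c \<psi>) \<and>
                        \<phi> = (\<lambda>v. \<Sum>\<psi>\<in>F. c \<psi> * \<psi> v)}"

definition co_gen :: "('a \<Rightarrow> real) set \<Rightarrow> ('a \<Rightarrow> real) set" where
  "co_gen A = {\<phi>. \<exists>F c. finite F \<and> F \<subseteq> A \<and> F \<noteq> {} \<and> (\<forall>\<psi>\<in>F. 0 \<le> c \<psi>) \<and>
                      sum c F = 1 \<and> \<phi> = (\<lambda>v. \<Sum>\<psi>\<in>F. c \<psi> * \<psi> v)}"

end

theory Submission
  imports Defs
begin

text \<open>Each of the three conditions is a strict separation statement. For a nonempty weak*-compact
  convex set P of functionals and any set G of functionals, a vector v with s(P, v) < 0 and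
  \<open>\<psi> v \<ge> 0\<close> on G exists iff P misses the weak*-closure of cone G: the functionals that are
  nonnegative at v form a weak*-closed cone, and conversely weak*-compactness of P reduces the
  separation to the values at finitely many points of X, where the minimum-norm point of the
  closure of the convex set P - cone G yields v.
  Conditions (1) and (2) for the index i are this statement for the two halves of C_i, and
  condition (3) is it for the convex hull of the shifted lower quasidifferentials of the active
  g_j, which is again weak*-compact.
  Only the compactness and convexity of the quasidifferentials enter.\<close>

section \<open>The topology of pointwise convergence\<close>

lemma continuous_on_evaluation: "continuous_on S (\<lambda>p::'a \<Rightarrow> 'b::topological_space. p x)"
  by (rule continuous_on_subset[OF continuous_on_product_coordinates]) simp

lemma open_fun_contains_finite_box:
  fixes U :: "('a \<Rightarrow> real) set"
  assumes "open U" "a \<in> U"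
  shows "\<exists>F e. finite F \<and> e > 0 \<and> {\<phi>. \<forall>x\<in>F. \<bar>\<phi> x - a x\<bar> < e} \<subseteq> U"
proof -
  have "openin (product_topology (\<lambda>i. euclidean) UNIV) U"
    using assms by (simp add: open_fun_def)
  from product_topology_open_contains_basis[OF this assms(2)]
  obtain X where X: "a \<in> (\<Pi>\<^sub>E i\<in>UNIV. X i)" "\<And>i. open (X i)" "finite {i. X i \<noteq> UNIV}"
     "(\<Pi>\<^sub>E i\<in>UNIV. X i) \<subseteq> U" by auto
  define F where "F = {i. X i \<noteq> UNIV}"
  obtain r where r: "\<And>i. i \<in> F \<Longrightarrow> r i > 0 \<and> ball (a i) (r i) \<subseteq> X i"
    using X(1,2) by (meson PiE_E UNIV_I openE)
  define e where "e = Min (insert 1 (r ` F))"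
  have "finite F" using X(3) by (simp add: F_def)
  then have "e > 0" and e_le: "\<And>i. i \<in> F \<Longrightarrow> e \<le> r i"
    using r by (auto simp: e_def)
  have "\<phi> \<in> U" if "\<forall>x\<in>F. \<bar>\<phi> x - a x\<bar> < e" for \<phi>
  proof -
    have "\<phi> i \<in> X i" for i
    proof (cases "i \<in> F")
      case True
      then have "\<phi> i \<in> ball (a i) (r i)"
        using that e_le[OF True] by (auto simp: dist_real_def)
      then show ?thesis using r[OF True] by blast
    qed (auto simp: F_def)
    then show ?thesis using X(4) by auto
  qed
  then show ?thesis using \<open>finite F\<close> \<open>e > 0\<close> by blast
qed

lemma open_finite_box:
  fixes a :: "'a \<Rightarrow> real"
  assumes "finite F"
  shows "open {\<phi>. \<forall>x\<in>F. \<bar>\<phi> x - a x\<bar> < r}"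
proof -
  have "open {\<phi>. \<forall>x\<in>F. \<phi> (id x) \<in> {y. \<bar>y - a x\<bar> < r}}"
    by (rule product_topology_basis') (auto intro!: open_Collect_less continuous_intros simp: assms)
  then show ?thesis by simp
qed

lemma compact_closed_separated_at_finitely_many_points:
  fixes A K :: "('a \<Rightarrow> real) set"
  assumes "compact A" "closed K" "A \<inter> K = {}"
  obtains F \<epsilon> where "finite F" "\<epsilon> > 0" "\<And>a k. a \<in> A \<Longrightarrow> k \<in> K \<Longrightarrow> \<exists>x\<in>F. \<epsilon> \<le> \<bar>a x - k x\<bar>"
proof (cases "A = {}")
  case True
  then show ?thesis by (intro that[of "{}" 1]) auto
next
  case False
  have "\<exists>F e. finite F \<and> e > 0 \<and> {\<phi>. \<forall>x\<in>F. \<bar>\<phi> x - a x\<bar> < e} \<subseteq> - K" if "a \<in> A" for a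
    using open_fun_contains_finite_box[of "- K" a] assms(2,3) that by auto
  then obtain Fa ea where Fa: "\<And>a. a \<in> A \<Longrightarrow>
      finite (Fa a) \<and> ea a > 0 \<and> {\<phi>. \<forall>x\<in>Fa a. \<bar>\<phi> x - a x\<bar> < ea a} \<subseteq> - K"
    by (metis (no_types))
  define W where "W a = {\<phi>. \<forall>x\<in>Fa a. \<bar>\<phi> x - a x\<bar> < ea a / 2}" for a
  have "open (W a)" if "a \<in> A" for a
    unfolding W_def using Fa[OF that] by (intro open_finite_box) auto
  moreover have "A \<subseteq> (\<Union>a\<in>A. W a)"
    using Fa by (fastforce simp: W_def)
  ultimately obtain T where T: "T \<subseteq> A" "finite T" "A \<subseteq> (\<Union>a\<in>T. W a)"
    using compactE_image[OF assms(1)] by blast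
  define \<epsilon> where "\<epsilon> = Min ((\<lambda>a. ea a / 2) ` T)"
  have "T \<noteq> {}" using T(3) False by auto
  then have "\<epsilon> > 0"
    using T Fa by (auto simp: \<epsilon>_def)
  have \<epsilon>_le: "\<epsilon> \<le> ea a / 2" if "a \<in> T" for a
    unfolding \<epsilon>_def using T(2) that by (intro Min_le) auto
  have "\<exists>x\<in>(\<Union>a\<in>T. Fa a). \<epsilon> \<le> \<bar>b x - k x\<bar>" if "b \<in> A" "k \<in> K" for b k
  proof -
    obtain a where a: "a \<in> T" "b \<in> W a" using T(3) \<open>b \<in> A\<close> by auto
    then obtain x where x: "x \<in> Fa a" "ea a \<le> \<bar>k x - a x\<bar>"
      using Fa[of a] T(1) \<open>k \<in> K\<close> by (force simp: subset_iff not_less)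
    have "\<bar>b x - a x\<bar> < ea a / 2" using a x by (auto simp: W_def)
    then have "\<epsilon> \<le> \<bar>b x - k x\<bar>" using x \<epsilon>_le[OF a(1)] by linarith
    then show ?thesis using x a by blast
  qed
  moreover have "finite (\<Union>a\<in>T. Fa a)" using T Fa by blast
  ultimately show ?thesis using that \<open>\<epsilon> > 0\<close> by blast
qed

section \<open>Convex sets and cones of functionals\<close>

text \<open>The function type carries no \<open>real_vector\<close> instance, so convexity is stated pointwise,
  as in wstar_convex_compact.\<close>

definition pointwise_convex :: "('a \<Rightarrow> real) set \<Rightarrow> bool" where
  "pointwise_convex S \<longleftrightarrow>
     (\<forall>\<phi>\<in>S. \<forall>\<psi>\<in>S. \<forall>t::real. 0 \<le> t \<and> t \<le> 1 \<longrightarrow> (\<lambda>v. t * \<phi> v + (1 - t) * \<psi> v) \<in> S)"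

lemma wstar_convex_compact_iff:
  "wstar_convex_compact K \<longleftrightarrow> K \<subseteq> dual_space \<and> compact K \<and> pointwise_convex K"
  by (simp add: wstar_convex_compact_def pointwise_convex_def)

lemma bounded_linear_of_wstar_convex_compact:
  "wstar_convex_compact D \<Longrightarrow> y \<in> D \<Longrightarrow> bounded_linear y"
  by (auto simp: wstar_convex_compact_def dual_space_def)

lemma pointwise_convex_closure:
  assumes "pointwise_convex S"
  shows "pointwise_convex (closure S)"
  unfolding pointwise_convex_def
proof (intro ballI allI impI)
  fix \<phi> \<psi> and t :: real
  assume "\<phi> \<in> closure S" "\<psi> \<in> closure S" "0 \<le> t \<and> t \<le> 1"
  define h where "h p = (\<lambda>v. t * fst p v + (1 - t) * snd p v)" for p :: "('a \<Rightarrow> real) \<times> ('a \<Rightarrow> real)"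
  have "continuous_on (closure (S \<times> S)) (\<lambda>p. fst p v)" for v
    by (rule continuous_on_product_then_coordinatewise[OF continuous_on_fst[OF continuous_on_id]])
  moreover have "continuous_on (closure (S \<times> S)) (\<lambda>p. snd p v)" for v
    by (rule continuous_on_product_then_coordinatewise[OF continuous_on_snd[OF continuous_on_id]])
  ultimately have "continuous_on (closure (S \<times> S)) h"
    unfolding h_def
    by (intro continuous_on_coordinatewise_then_product continuous_on_add continuous_on_mult_left)
  moreover have "h ` (S \<times> S) \<subseteq> closure S"
  proof (clarify)
    fix a b assume "a \<in> S" "b \<in> S"
    then have "h (a, b) \<in> S"
      using assms \<open>0 \<le> t \<and> t \<le> 1\<close> by (simp add: h_def pointwise_convex_def)
    then show "h (a, b) \<in> closure S" using closure_subset by blast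
  qed
  ultimately have "h ` closure (S \<times> S) \<subseteq> closure S"
    by (rule image_closure_subset[OF _ closed_closure])
  moreover have "(\<phi>, \<psi>) \<in> closure (S \<times> S)"
    using \<open>\<phi> \<in> closure S\<close> \<open>\<psi> \<in> closure S\<close> by (simp add: closure_Times)
  ultimately show "(\<lambda>v. t * \<phi> v + (1 - t) * \<psi> v) \<in> closure S"
    by (auto simp: h_def)
qed

lemma pointwise_convex_reweight:
  assumes "pointwise_convex S" "a \<in> S" "b \<in> S" "0 \<le> \<alpha>" "0 \<le> \<beta>"
  shows "\<exists>c\<in>S. \<forall>v. \<alpha> * a v + \<beta> * b v = (\<alpha> + \<beta>) * c v"
proof (cases "\<alpha> + \<beta> = 0")
  case True
  then have "\<alpha> = 0" "\<beta> = 0" using assms(4,5) by linarith+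
  then show ?thesis using assms(2) by auto
next
  case False
  define t where "t = \<alpha> / (\<alpha> + \<beta>)"
  have "0 \<le> t" "t \<le> 1" using assms(4,5) False by (auto simp: t_def)
  then have "(\<lambda>v. t * a v + (1 - t) * b v) \<in> S"
    using assms(1-3) by (simp add: pointwise_convex_def)
  moreover have "\<alpha> * a v + \<beta> * b v = (\<alpha> + \<beta>) * (t * a v + (1 - t) * b v)" for v
  proof -
    have "(\<alpha> + \<beta>) * t = \<alpha>" "(\<alpha> + \<beta>) * (1 - t) = \<beta>"
      using False by (simp_all add: t_def field_simps)
    moreover have "(\<alpha> + \<beta>) * (t * a v + (1 - t) * b v)
        = ((\<alpha> + \<beta>) * t) * a v + ((\<alpha> + \<beta>) * (1 - t)) * b v"
      by (simp add: algebra_simps)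
    ultimately show ?thesis by simp
  qed
  ultimately show ?thesis by (intro bexI[of _ "\<lambda>v. t * a v + (1 - t) * b v"]) auto
qed

lemma cone_gen_zero: "(\<lambda>v. 0) \<in> cone_gen G"
  unfolding cone_gen_def by (auto intro!: exI[of _ "{}"])

lemma cone_gen_scale: "\<psi> \<in> G \<Longrightarrow> 0 \<le> t \<Longrightarrow> (\<lambda>v. t * \<psi> v) \<in> cone_gen G"
  unfolding cone_gen_def by (auto intro!: exI[of _ "{\<psi>}"] exI[of _ "\<lambda>_. t"])

lemma cone_gen_nonneg_combination:
  assumes "\<phi>1 \<in> cone_gen G" "\<phi>2 \<in> cone_gen G" "0 \<le> s" "0 \<le> t"
  shows "(\<lambda>v. s * \<phi>1 v + t * \<phi>2 v) \<in> cone_gen G"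
proof -
  obtain F1 c1 where 1: "finite F1" "F1 \<subseteq> G" "\<forall>\<psi>\<in>F1. 0 \<le> c1 \<psi>" "\<phi>1 = (\<lambda>v. \<Sum>\<psi>\<in>F1. c1 \<psi> * \<psi> v)"
    using assms(1) unfolding cone_gen_def by blast
  obtain F2 c2 where 2: "finite F2" "F2 \<subseteq> G" "\<forall>\<psi>\<in>F2. 0 \<le> c2 \<psi>" "\<phi>2 = (\<lambda>v. \<Sum>\<psi>\<in>F2. c2 \<psi> * \<psi> v)"
    using assms(2) unfolding cone_gen_def by blast
  define d1 where "d1 \<psi> = (if \<psi> \<in> F1 then c1 \<psi> else 0)" for \<psi>
  define d2 where "d2 \<psi> = (if \<psi> \<in> F2 then c2 \<psi> else 0)" for \<psi>
  have e1: "(\<Sum>\<psi>\<in>F1 \<union> F2. d1 \<psi> * \<psi> v) = \<phi>1 v" for v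
  proof -
    have "(\<Sum>\<psi>\<in>F1 \<union> F2. d1 \<psi> * \<psi> v) = (\<Sum>\<psi>\<in>F1. d1 \<psi> * \<psi> v)"
      using 1(1) 2(1) by (intro sum.mono_neutral_right) (auto simp: d1_def)
    then show ?thesis using 1(4) by (simp add: d1_def)
  qed
  have e2: "(\<Sum>\<psi>\<in>F1 \<union> F2. d2 \<psi> * \<psi> v) = \<phi>2 v" for v
  proof -
    have "(\<Sum>\<psi>\<in>F1 \<union> F2. d2 \<psi> * \<psi> v) = (\<Sum>\<psi>\<in>F2. d2 \<psi> * \<psi> v)"
      using 1(1) 2(1) by (intro sum.mono_neutral_right) (auto simp: d2_def)
    then show ?thesis using 2(4) by (simp add: d2_def)
  qed
  have "(\<lambda>v. s * \<phi>1 v + t * \<phi>2 v) = (\<lambda>v. \<Sum>\<psi>\<in>F1 \<union> F2. (s * d1 \<psi> + t * d2 \<psi>) * \<psi> v)"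
    by (simp add: sum_distrib_left sum.distrib algebra_simps flip: e1 e2)
  moreover have "\<forall>\<psi>\<in>F1 \<union> F2. 0 \<le> s * d1 \<psi> + t * d2 \<psi>"
    using 1(3) 2(3) assms(3,4) by (auto simp: d1_def d2_def)
  ultimately show ?thesis
    unfolding cone_gen_def using 1(1,2) 2(1,2)
    by (intro CollectI exI[of _ "F1 \<union> F2"] exI[of _ "\<lambda>\<psi>. s * d1 \<psi> + t * d2 \<psi>"]) simp
qed

lemma linear_cone_gen:
  assumes "\<forall>\<psi>\<in>G. linear \<psi>" "k \<in> cone_gen G"
  shows "linear k"
proof -
  obtain F c where "F \<subseteq> G" and k: "k = (\<lambda>v. \<Sum>\<psi>\<in>F. c \<psi> * \<psi> v)"
    using assms(2) unfolding cone_gen_def by blast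
  have "linear (\<lambda>v. c \<psi> * \<psi> v)" if "\<psi> \<in> F" for \<psi>
    using linear_compose_scale_right[of \<psi> "c \<psi>"] assms(1) \<open>F \<subseteq> G\<close> that by auto
  then show ?thesis
    unfolding k by (intro linear_compose_sum) blast
qed

lemma closure_cone_gen_nonneg:
  assumes "\<forall>\<psi>\<in>G. 0 \<le> \<psi> v" "\<phi> \<in> closure (cone_gen G)"
  shows "0 \<le> \<phi> v"
proof -
  have "cone_gen G \<subseteq> {\<phi>. 0 \<le> \<phi> v}"
    using assms(1) by (force simp: cone_gen_def subset_iff intro!: sum_nonneg)
  moreover have "closed {\<phi>::'a \<Rightarrow> real. 0 \<le> \<phi> v}"
    by (rule closed_Collect_le[OF continuous_on_const continuous_on_product_coordinates])
  ultimately show ?thesis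
    using closure_minimal assms(2) by blast
qed

lemma cone_gen_bounded_above_imp_nonpos:
  assumes "\<forall>k\<in>cone_gen G. k v \<le> c" "\<psi> \<in> G"
  shows "\<psi> v \<le> 0"
proof (rule ccontr)
  assume "\<not> \<psi> v \<le> 0"
  define t where "t = (\<bar>c\<bar> + 1) / \<psi> v"
  have "t \<ge> 0" and "t * \<psi> v = \<bar>c\<bar> + 1"
    using \<open>\<not> \<psi> v \<le> 0\<close> by (auto simp: t_def)
  moreover have "t * \<psi> v \<le> c"
    using assms cone_gen_scale[OF \<open>\<psi> \<in> G\<close> \<open>t \<ge> 0\<close>] by auto
  ultimately show False by linarith
qed

lemma co_gen_negative:
  assumes "\<forall>\<psi>\<in>U. \<psi> v < 0" "\<phi> \<in> co_gen U"
  shows "\<phi> v < 0"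
proof -
  obtain F c where F: "finite F" "F \<subseteq> U" "F \<noteq> {}" "\<forall>\<psi>\<in>F. 0 \<le> c \<psi>" "sum c F = 1"
     "\<phi> = (\<lambda>v. \<Sum>\<psi>\<in>F. c \<psi> * \<psi> v)"
    using assms(2) unfolding co_gen_def by blast
  define M where "M = Max ((\<lambda>\<psi>. \<psi> v) ` F)"
  have "M < 0" using F assms(1) by (auto simp: M_def)
  have "\<phi> v \<le> (\<Sum>\<psi>\<in>F. c \<psi> * M)"
    unfolding F(6) using F(1,4) by (intro sum_mono mult_left_mono) (auto simp: M_def)
  also have "\<dots> = M" using F(5) by (simp add: sum_distrib_right[symmetric])
  finally show ?thesis using \<open>M < 0\<close> by simp
qed

lemma nonneg_on_neg_set_iff: "(\<forall>\<psi>\<in>neg_set X. 0 \<le> \<psi> v) \<longleftrightarrow> (\<forall>\<phi>\<in>X. \<phi> v \<le> 0)"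
  by (auto simp: neg_set_def)

lemma neg_set_subset_dual_space: "X \<subseteq> dual_space \<Longrightarrow> neg_set X \<subseteq> dual_space"
  by (auto simp: neg_set_def dual_space_def intro: bounded_linear_minus)

section \<open>Separating a compact convex set from a cone\<close>

lemma nonneg_of_quadratic_lower_bound:
  fixes d N :: real
  assumes "\<And>l. 0 < l \<Longrightarrow> l \<le> 1 \<Longrightarrow> 0 \<le> 2 * l * d + l\<^sup>2 * N"
  shows "0 \<le> d"
proof -
  have "0 \<le> 2 * d + l * N" if "l \<in> {0<..<1}" for l
  proof -
    have "0 \<le> l * (2 * d + l * N)"
      using assms[of l] that by (simp add: power2_eq_square algebra_simps)
    then show ?thesis using that by (simp add: zero_le_mult_iff)
  qed
  then have "eventually (\<lambda>l. 0 \<le> 2 * d + l * N) (at_right 0)"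
    by (intro eventually_at_rightI[of 0 1]) auto
  moreover have "((\<lambda>l. 2 * d + l * N) \<longlongrightarrow> 2 * d) (at_right 0)"
    using tendsto_add[OF tendsto_const tendsto_mult_left_zero[OF tendsto_ident_at]] by simp
  ultimately show ?thesis
    using tendsto_lowerbound by fastforce
qed

lemma sum_squares_attains_min:
  fixes X :: "('a \<Rightarrow> real) set"
  assumes "finite Q" "closed X" "X \<noteq> {}" "\<And>p x. p \<in> X \<Longrightarrow> x \<notin> Q \<Longrightarrow> p x = 0"
  shows "\<exists>p\<in>X. \<forall>q\<in>X. (\<Sum>x\<in>Q. (p x)\<^sup>2) \<le> (\<Sum>x\<in>Q. (q x)\<^sup>2)"
proof -
  define g where "g p = (\<Sum>x\<in>Q. (p x)\<^sup>2)" for p :: "'a \<Rightarrow> real"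
  obtain p0 where "p0 \<in> X" using assms(3) by blast
  define S where "S = X \<inter> {p. g p \<le> g p0}"
  have cont: "continuous_on A g" for A
    unfolding g_def by (intro continuous_intros continuous_on_evaluation)
  define B0 where "B0 = (\<Pi>\<^sub>E x\<in>UNIV. if x \<in> Q then {- sqrt (g p0)..sqrt (g p0)} else {0::real})"
  have "S \<subseteq> B0"
  proof
    fix p assume "p \<in> S"
    have "p x \<in> (if x \<in> Q then {- sqrt (g p0)..sqrt (g p0)} else {0})" for x
    proof (cases "x \<in> Q")
      case True
      have "(p x)\<^sup>2 \<le> g p" unfolding g_def using assms(1) True by (intro member_le_sum) auto
      also have "\<dots> \<le> g p0" using \<open>p \<in> S\<close> by (simp add: S_def)
      finally have "\<bar>p x\<bar> \<le> sqrt (g p0)" by (simp add: real_le_rsqrt)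
      then show ?thesis using True by auto
    qed (use assms(4) \<open>p \<in> S\<close> S_def in auto)
    then show "p \<in> B0" by (simp add: B0_def PiE_iff)
  qed
  have "compactin (product_topology (\<lambda>x. euclidean) UNIV) B0"
    unfolding B0_def by (subst compactin_PiE) auto
  then have "compact B0" by (simp add: euclidean_product_topology)
  moreover have "closed S"
    unfolding S_def using assms(2) by (intro closed_Int closed_Collect_le cont continuous_on_const)
  ultimately have "compact (B0 \<inter> S)" by (rule compact_Int_closed)
  then have "compact S" using \<open>S \<subseteq> B0\<close> by (simp add: Int_absorb1)
  moreover have "p0 \<in> S" using \<open>p0 \<in> X\<close> by (simp add: S_def)
  ultimately obtain p where "p \<in> S" "\<forall>q\<in>S. g p \<le> g q"
    using continuous_attains_inf[OF _ _ cont] by blast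
  then show ?thesis
    by (intro bexI[of _ p]) (auto simp: S_def g_def[symmetric] not_le dest: less_imp_le)
qed

lemma min_norm_point_variational_inequality:
  fixes T :: "('a \<Rightarrow> real) set"
  assumes "finite Q" "T \<noteq> {}" "pointwise_convex T" "\<And>p x. p \<in> T \<Longrightarrow> x \<notin> Q \<Longrightarrow> p x = 0"
  shows "\<exists>p\<in>closure T. \<forall>q\<in>closure T. (\<Sum>x\<in>Q. (p x)\<^sup>2) \<le> (\<Sum>x\<in>Q. p x * q x)"
proof -
  have "closed {p::'a \<Rightarrow> real. p x = 0}" for x
    by (rule closed_Collect_eq[OF continuous_on_evaluation continuous_on_const])
  then have "closure T \<subseteq> (\<Inter>x\<in>-Q. {p. p x = 0})"
    using assms(4) by (intro closure_minimal closed_INT) auto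
  then obtain p where p: "p \<in> closure T" "\<forall>q\<in>closure T. (\<Sum>x\<in>Q. (p x)\<^sup>2) \<le> (\<Sum>x\<in>Q. (q x)\<^sup>2)"
    using sum_squares_attains_min[OF assms(1) closed_closure] assms(2) by blast
  have "(\<Sum>x\<in>Q. (p x)\<^sup>2) \<le> (\<Sum>x\<in>Q. p x * q x)" if "q \<in> closure T" for q
  proof -
    define d where "d = (\<Sum>x\<in>Q. p x * (q x - p x))"
    define N where "N = (\<Sum>x\<in>Q. (q x - p x)\<^sup>2)"
    have "0 \<le> 2 * l * d + l\<^sup>2 * N" if "0 < l" "l \<le> 1" for l
    proof -
      have "(\<lambda>x. l * q x + (1 - l) * p x) \<in> closure T"
        using pointwise_convex_closure[OF assms(3)] \<open>q \<in> closure T\<close> p(1) that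
        unfolding pointwise_convex_def by auto
      then have "(\<Sum>x\<in>Q. (p x)\<^sup>2) \<le> (\<Sum>x\<in>Q. (l * q x + (1 - l) * p x)\<^sup>2)"
        using bspec[OF p(2)] by simp
      also have "\<dots> = (\<Sum>x\<in>Q. (p x)\<^sup>2 + 2 * l * (p x * (q x - p x)) + l\<^sup>2 * (q x - p x)\<^sup>2)"
        by (intro sum.cong) (simp_all add: power2_eq_square algebra_simps)
      also have "\<dots> = (\<Sum>x\<in>Q. (p x)\<^sup>2) + 2 * l * d + l\<^sup>2 * N"
        unfolding d_def N_def by (simp add: sum.distrib sum_distrib_left)
      finally show ?thesis by simp
    qed
    then have "0 \<le> d" by (rule nonneg_of_quadratic_lower_bound)
    then show ?thesis
      by (simp add: d_def right_diff_distrib sum_subtractf power2_eq_square)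
  qed
  then show ?thesis using p(1) by blast
qed

lemma pointwise_convex_cone_gen: "pointwise_convex (cone_gen G)"
  unfolding pointwise_convex_def
proof (intro ballI allI impI)
  fix \<phi> \<psi> and t :: real
  assume "\<phi> \<in> cone_gen G" "\<psi> \<in> cone_gen G" "0 \<le> t \<and> t \<le> 1"
  then show "(\<lambda>v. t * \<phi> v + (1 - t) * \<psi> v) \<in> cone_gen G"
    by (simp add: cone_gen_nonneg_combination)
qed

definition restricted_difference :: "'a set \<Rightarrow> ('a \<Rightarrow> real) \<Rightarrow> ('a \<Rightarrow> real) \<Rightarrow> 'a \<Rightarrow> real" where
  "restricted_difference F a k = (\<lambda>x. if x \<in> F then a x - k x else 0)"

lemma pointwise_convex_restricted_differences:
  assumes "pointwise_convex A" "pointwise_convex K"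
  shows "pointwise_convex {restricted_difference F a k | a k. a \<in> A \<and> k \<in> K}"
  unfolding pointwise_convex_def
proof (intro ballI allI impI)
  fix p q and t :: real
  assume "p \<in> {restricted_difference F a k | a k. a \<in> A \<and> k \<in> K}"
    and "q \<in> {restricted_difference F a k | a k. a \<in> A \<and> k \<in> K}" and t: "0 \<le> t \<and> t \<le> 1"
  then obtain a1 k1 a2 k2 where "a1 \<in> A" "k1 \<in> K" "a2 \<in> A" "k2 \<in> K"
    and pq: "p = restricted_difference F a1 k1" "q = restricted_difference F a2 k2"
    by blast
  then have "(\<lambda>v. t * a1 v + (1 - t) * a2 v) \<in> A" "(\<lambda>v. t * k1 v + (1 - t) * k2 v) \<in> K"
    using assms t by (simp_all add: pointwise_convex_def)
  moreover have "(\<lambda>x. t * p x + (1 - t) * q x) = restricted_difference F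
      (\<lambda>v. t * a1 v + (1 - t) * a2 v) (\<lambda>v. t * k1 v + (1 - t) * k2 v)"
    unfolding pq by (simp add: restricted_difference_def fun_eq_iff algebra_simps)
  ultimately show "(\<lambda>x. t * p x + (1 - t) * q x)
      \<in> {restricted_difference F a k | a k. a \<in> A \<and> k \<in> K}"
    by blast
qed

lemma exists_positive_on_convex_away_from_zero:
  fixes T :: "('a \<Rightarrow> real) set"
  assumes "finite F" "\<epsilon> > 0" "T \<noteq> {}" "pointwise_convex T"
    and "\<And>q x. q \<in> T \<Longrightarrow> x \<notin> F \<Longrightarrow> q x = 0" and "\<And>q. q \<in> T \<Longrightarrow> \<exists>x\<in>F. \<epsilon> \<le> \<bar>q x\<bar>"
  shows "\<exists>p. \<forall>q\<in>T. 0 < (\<Sum>x\<in>F. p x * q x)"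
proof -
  obtain p where p: "p \<in> closure T"
    and var_ineq: "\<forall>q\<in>closure T. (\<Sum>x\<in>F. (p x)\<^sup>2) \<le> (\<Sum>x\<in>F. p x * q x)"
    using min_norm_point_variational_inequality[OF assms(1,3,4)] assms(5) by blast
  have "T \<subseteq> {q. \<epsilon>\<^sup>2 \<le> (\<Sum>x\<in>F. (q x)\<^sup>2)}"
  proof
    fix q assume "q \<in> T"
    then obtain x where "x \<in> F" "\<epsilon> \<le> \<bar>q x\<bar>" using assms(6) by blast
    then have "\<epsilon>\<^sup>2 \<le> \<bar>q x\<bar>\<^sup>2"
      using assms(2) by (intro power_mono) auto
    also have "\<dots> = (q x)\<^sup>2" by simp
    also have "\<dots> \<le> (\<Sum>x\<in>F. (q x)\<^sup>2)"
      using assms(1) \<open>x \<in> F\<close> by (intro member_le_sum) simp_all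
    finally show "q \<in> {q. \<epsilon>\<^sup>2 \<le> (\<Sum>x\<in>F. (q x)\<^sup>2)}" by simp
  qed
  moreover have "closed {q::'a \<Rightarrow> real. \<epsilon>\<^sup>2 \<le> (\<Sum>x\<in>F. (q x)\<^sup>2)}"
    by (intro closed_Collect_le continuous_on_const continuous_on_sum continuous_on_power
        continuous_on_evaluation)
  ultimately have "\<epsilon>\<^sup>2 \<le> (\<Sum>x\<in>F. (p x)\<^sup>2)"
    using closure_minimal p by blast
  then have "0 < (\<Sum>x\<in>F. (p x)\<^sup>2)"
    using assms(2) by (meson less_le_trans zero_less_power)
  then show ?thesis
    using var_ineq closure_subset by (meson less_le_trans subsetD)
qed

text \<open>Restricted to the finitely many points that keep A away from the closed cone, the differences
  \<open>a - k\<close> form a convex set bounded away from 0; the coefficients p of a linear form positive on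
  it give the separating vector \<open>\<Sum>x\<in>F. p x *\<^sub>R x\<close>.\<close>

lemma exists_vector_separating_compact_from_cone:
  fixes A G :: "('a::real_vector \<Rightarrow> real) set"
  assumes "compact A" "pointwise_convex A" "\<forall>\<phi>\<in>A. linear \<phi>" "\<forall>\<psi>\<in>G. linear \<psi>"
    and "A \<inter> closure (cone_gen G) = {}"
  shows "\<exists>v. \<forall>a\<in>A. \<forall>k\<in>cone_gen G. k v < a v"
proof (cases "A = {}")
  case False
  obtain F \<epsilon> where F: "finite F" "\<epsilon> > 0"
    and gap: "\<And>a k. a \<in> A \<Longrightarrow> k \<in> closure (cone_gen G) \<Longrightarrow> \<exists>x\<in>F. \<epsilon> \<le> \<bar>a x - k x\<bar>"
    using compact_closed_separated_at_finitely_many_points[OF assms(1) closed_closure assms(5)] by blast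
  define T where "T = {restricted_difference F a k | a k. a \<in> A \<and> k \<in> cone_gen G}"
  have "T \<noteq> {}" using False cone_gen_zero by (auto simp: T_def)
  moreover have "pointwise_convex T"
    unfolding T_def
    by (rule pointwise_convex_restricted_differences[OF assms(2) pointwise_convex_cone_gen])
  moreover have "\<And>q x. q \<in> T \<Longrightarrow> x \<notin> F \<Longrightarrow> q x = 0"
    by (auto simp: T_def restricted_difference_def)
  moreover have "\<exists>x\<in>F. \<epsilon> \<le> \<bar>q x\<bar>" if "q \<in> T" for q
  proof -
    obtain a k where "a \<in> A" "k \<in> cone_gen G" "q = restricted_difference F a k"
      using \<open>q \<in> T\<close> by (auto simp: T_def)
    then show ?thesis
      using gap[of a k] closure_subset by (auto simp: restricted_difference_def)
  qed
  ultimately obtain p where p: "\<forall>q\<in>T. 0 < (\<Sum>x\<in>F. p x * q x)"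
    using exists_positive_on_convex_away_from_zero[OF F] by blast
  define v where "v = (\<Sum>x\<in>F. p x *\<^sub>R x)"
  have eval: "\<phi> v = (\<Sum>x\<in>F. p x * \<phi> x)" if "linear \<phi>" for \<phi> :: "'a \<Rightarrow> real"
    using that by (simp add: v_def linear_sum linear_scale)
  have "k v < a v" if "a \<in> A" "k \<in> cone_gen G" for a k
  proof -
    have "0 < (\<Sum>x\<in>F. p x * restricted_difference F a k x)"
      using p that by (auto simp: T_def)
    also have "\<dots> = a v - k v"
      using eval assms(3) linear_cone_gen[OF assms(4) that(2)] that(1)
      by (simp add: restricted_difference_def sum_subtractf right_diff_distrib)
    finally show ?thesis by simp
  qed
  then show ?thesis by blast
qed simp

lemma exists_vector_negative_on_compact_nonneg_on_generators:
  fixes A G :: "('a::real_vector \<Rightarrow> real) set"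
  assumes "compact A" "pointwise_convex A" "\<forall>\<phi>\<in>A. linear \<phi>" "\<forall>\<psi>\<in>G. linear \<psi>"
    and "A \<inter> closure (cone_gen G) = {}"
  shows "\<exists>v. (\<forall>\<phi>\<in>A. \<phi> v < 0) \<and> (\<forall>\<psi>\<in>G. 0 \<le> \<psi> v)"
proof (cases "A = {}")
  case True
  then show ?thesis using assms(4) by (intro exI[of _ 0]) (simp add: linear_0)
next
  case False
  then obtain a0 where "a0 \<in> A" by blast
  obtain v where v: "\<forall>a\<in>A. \<forall>k\<in>cone_gen G. k v < a v"
    using exists_vector_separating_compact_from_cone[OF assms] by blast
  then have "\<forall>k\<in>cone_gen G. k v \<le> a0 v"
    using \<open>a0 \<in> A\<close> by (simp add: less_imp_le)
  then have "\<psi> (- v) \<ge> 0" if "\<psi> \<in> G" for \<psi>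
    using cone_gen_bounded_above_imp_nonpos[OF _ that] assms(4) that by (simp add: linear_neg)
  moreover have "\<phi> (- v) < 0" if "\<phi> \<in> A" for \<phi>
    using bspec[OF bspec[OF v that] cone_gen_zero] assms(3) that by (simp add: linear_neg)
  ultimately show ?thesis by blast
qed

section \<open>Support functions and quasidifferentials\<close>

lemma support_fun_attained:
  assumes "compact A" "A \<noteq> {}"
  obtains a where "a \<in> A" "support_fun A v = a v" "\<forall>\<phi>\<in>A. \<phi> v \<le> a v"
proof -
  obtain a where a: "a \<in> A" "\<forall>\<phi>\<in>A. \<phi> v \<le> a v"
    using continuous_attains_sup[OF assms continuous_on_evaluation] by blast
  then have "support_fun A v = a v"
    unfolding support_fun_def by (intro cSup_eq_maximum) auto
  then show ?thesis using that a by blast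
qed

lemma support_fun_le_iff:
  assumes "compact A" "A \<noteq> {}"
  shows "support_fun A v \<le> c \<longleftrightarrow> (\<forall>\<phi>\<in>A. \<phi> v \<le> c)"
proof -
  obtain a where a: "a \<in> A" "support_fun A v = a v" "\<forall>\<phi>\<in>A. \<phi> v \<le> a v"
    using support_fun_attained[OF assms] by blast
  have "(\<forall>\<phi>\<in>A. \<phi> v \<le> c) \<longleftrightarrow> a v \<le> c"
    using a(1,3) by (meson order.trans)
  then show ?thesis using a(2) by simp
qed

lemma support_fun_less_iff:
  assumes "compact A" "A \<noteq> {}"
  shows "support_fun A v < c \<longleftrightarrow> (\<forall>\<phi>\<in>A. \<phi> v < c)"
proof -
  obtain a where a: "a \<in> A" "support_fun A v = a v" "\<forall>\<phi>\<in>A. \<phi> v \<le> a v"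
    using support_fun_attained[OF assms] by blast
  have "(\<forall>\<phi>\<in>A. \<phi> v < c) \<longleftrightarrow> a v < c"
    using a(1,3) by (meson le_less_trans)
  then show ?thesis using a(2) by simp
qed

lemma nonneg_on_neg_sets_iff:
  assumes "\<forall>k\<in>K. compact (A k) \<and> A k \<noteq> {} \<and> compact (B k) \<and> B k \<noteq> {}"
  shows "(\<forall>\<psi>\<in>(\<Union>k\<in>K. neg_set (A k \<union> B k)). 0 \<le> \<psi> v) \<longleftrightarrow>
    (\<forall>k\<in>K. support_fun (A k) v \<le> 0 \<and> support_fun (B k) v \<le> 0)"
proof -
  have "(\<forall>\<psi>\<in>(\<Union>k\<in>K. neg_set (A k \<union> B k)). 0 \<le> \<psi> v) \<longleftrightarrow>
      (\<forall>k\<in>K. \<forall>\<phi>\<in>A k \<union> B k. \<phi> v \<le> 0)"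
    by (simp add: nonneg_on_neg_set_iff[symmetric])
  also have "\<dots> \<longleftrightarrow> (\<forall>k\<in>K. support_fun (A k) v \<le> 0 \<and> support_fun (B k) v \<le> 0)"
    using assms by (intro ball_cong refl) (simp add: support_fun_le_iff ball_Un)
  finally show ?thesis .
qed

lemma wstar_convex_compact_affine_image:
  assumes "wstar_convex_compact D" "bounded_linear y"
  shows "wstar_convex_compact ((\<lambda>\<phi> v. c * \<phi> v + y v) ` D)"
  unfolding wstar_convex_compact_iff
proof (intro conjI)
  have D: "D \<subseteq> dual_space" "compact D" "pointwise_convex D"
    using assms(1) by (simp_all add: wstar_convex_compact_iff)
  show "(\<lambda>\<phi> v. c * \<phi> v + y v) ` D \<subseteq> dual_space"
    using D(1) assms(2)
    by (auto simp: dual_space_def intro!: bounded_linear_add bounded_linear_const_mult)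
  have "continuous_on D (\<lambda>\<phi> v. c * \<phi> v + y v)"
    by (intro continuous_on_coordinatewise_then_product continuous_on_add continuous_on_mult_left
        continuous_on_evaluation continuous_on_const)
  then show "compact ((\<lambda>\<phi> v. c * \<phi> v + y v) ` D)"
    using D(2) by (rule compact_continuous_image)
  show "pointwise_convex ((\<lambda>\<phi> v. c * \<phi> v + y v) ` D)"
    unfolding pointwise_convex_def
  proof (clarify)
    fix a b and t :: real assume "a \<in> D" "b \<in> D" "0 \<le> t" "t \<le> 1"
    then have "(\<lambda>v. t * a v + (1 - t) * b v) \<in> D"
      using D(3) by (simp add: pointwise_convex_def)
    moreover have "(\<lambda>v. t * (c * a v + y v) + (1 - t) * (c * b v + y v))
        = (\<lambda>v. c * (t * a v + (1 - t) * b v) + y v)"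
      by (simp add: algebra_simps)
    ultimately show "(\<lambda>v. t * (c * a v + y v) + (1 - t) * (c * b v + y v))
        \<in> (\<lambda>\<phi> v. c * \<phi> v + y v) ` D"
      by (intro image_eqI[where x="\<lambda>v. t * a v + (1 - t) * b v"]) simp_all
  qed
qed

lemma wstar_convex_compact_shift_set:
  "wstar_convex_compact D \<Longrightarrow> bounded_linear y \<Longrightarrow> wstar_convex_compact (shift_set D y)"
  using wstar_convex_compact_affine_image[of D y 1] by (simp add: shift_set_def)

lemma wstar_convex_compact_neg_shift_set:
  assumes "wstar_convex_compact D" "bounded_linear x"
  shows "wstar_convex_compact (neg_shift_set x D)"
proof -
  have "neg_shift_set x D = (\<lambda>\<phi> v. (- 1) * \<phi> v + - x v) ` D"
    unfolding neg_shift_set_def by (intro image_cong refl) (simp add: fun_eq_iff)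
  then show ?thesis
    using wstar_convex_compact_affine_image[OF assms(1) bounded_linear_minus[OF assms(2)], of "- 1"]
    by simp
qed

lemma wstar_convex_compact_shift_set_quasidifferential:
  assumes "quasidifferentiable_with f x Dl Du" "y \<in> Du"
  shows "wstar_convex_compact (shift_set Dl y) \<and> shift_set Dl y \<noteq> {}"
proof -
  have D: "wstar_convex_compact Dl" "Dl \<noteq> {}" "wstar_convex_compact Du"
    using assms(1) by (simp_all add: quasidifferentiable_with_def)
  moreover have "bounded_linear y"
    by (rule bounded_linear_of_wstar_convex_compact[OF D(3) assms(2)])
  ultimately show ?thesis
    by (simp add: wstar_convex_compact_shift_set) (simp add: shift_set_def)
qed

lemma wstar_convex_compact_neg_shift_set_quasidifferential:
  assumes "quasidifferentiable_with f x Dl Du" "x' \<in> Dl"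
  shows "wstar_convex_compact (neg_shift_set x' Du) \<and> neg_shift_set x' Du \<noteq> {}"
proof -
  have D: "wstar_convex_compact Du" "Du \<noteq> {}" "wstar_convex_compact Dl"
    using assms(1) by (simp_all add: quasidifferentiable_with_def)
  moreover have "bounded_linear x'"
    by (rule bounded_linear_of_wstar_convex_compact[OF D(3) assms(2)])
  ultimately show ?thesis
    by (simp add: wstar_convex_compact_neg_shift_set) (simp add: neg_shift_set_def)
qed

section \<open>The convex hull of finitely many compact convex sets\<close>

text \<open>For convex sets S j, the set of mixtures \<open>mix J ` weighted_selections J S\<close> is the convex hull
  of \<open>\<Union>j\<in>J. S j\<close>; parametrising it by weighted selections, pinned to \<open>(0, 0)\<close> outside J,
  makes its compactness evident.\<close>

definition weighted_selections ::
  "'i set \<Rightarrow> ('i \<Rightarrow> ('a \<Rightarrow> real) set) \<Rightarrow> ('i \<Rightarrow> real \<times> ('a \<Rightarrow> real)) set" where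
  "weighted_selections J S =
     {f. (\<forall>j. f j \<in> (if j \<in> J then {0..1} \<times> S j else {(0, \<lambda>v. 0)})) \<and> (\<Sum>j\<in>J. fst (f j)) = 1}"

definition mix :: "'i set \<Rightarrow> ('i \<Rightarrow> real \<times> ('a \<Rightarrow> real)) \<Rightarrow> 'a \<Rightarrow> real" where
  "mix J f = (\<lambda>v. \<Sum>j\<in>J. fst (f j) * snd (f j) v)"

lemma weighted_selections_memD:
  assumes "f \<in> weighted_selections J S" "j \<in> J"
  shows "0 \<le> fst (f j)" "fst (f j) \<le> 1" "snd (f j) \<in> S j"
  using assms by (auto simp: weighted_selections_def dest!: spec[of _ j])

lemma weighted_selections_sum:
  "f \<in> weighted_selections J S \<Longrightarrow> (\<Sum>j\<in>J. fst (f j)) = 1"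
  by (simp add: weighted_selections_def)

lemma compact_weighted_selections:
  fixes J :: "'i set" and S :: "'i \<Rightarrow> ('a \<Rightarrow> real) set"
  assumes "\<forall>j\<in>J. compact (S j)"
  shows "compact (weighted_selections J S)"
proof -
  define X where "X j = (if j \<in> J then {0..1::real} \<times> S j else {(0::real, \<lambda>v. 0)})" for j
  have "compact (X j)" for j
    by (cases "j \<in> J") (simp_all add: X_def assms compact_Times)
  then have "compactin (product_topology (\<lambda>j. euclidean) UNIV) (\<Pi>\<^sub>E j\<in>UNIV. X j)"
    by (simp add: compactin_PiE)
  then have box: "compact (\<Pi>\<^sub>E j\<in>UNIV. X j)"
    by (simp add: euclidean_product_topology)
  have "continuous_on UNIV (\<lambda>f::'i \<Rightarrow> real \<times> ('a \<Rightarrow> real). fst (f j))" for j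
    by (rule continuous_on_fst[OF continuous_on_evaluation])
  then have simplex: "closed {f::'i \<Rightarrow> real \<times> ('a \<Rightarrow> real). (\<Sum>j\<in>J. fst (f j)) = 1}"
    by (simp add: closed_Collect_eq continuous_on_sum)
  have "f \<in> (\<Pi>\<^sub>E j\<in>UNIV. X j) \<longleftrightarrow> (\<forall>j. f j \<in> X j)" for f
    by (simp add: PiE_iff)
  then have "weighted_selections J S = (\<Pi>\<^sub>E j\<in>UNIV. X j) \<inter> {f. (\<Sum>j\<in>J. fst (f j)) = 1}"
    unfolding weighted_selections_def set_eq_iff Int_iff mem_Collect_eq X_def by blast
  then show ?thesis
    using compact_Int_closed[OF box simplex] by simp
qed

lemma continuous_on_mix: "continuous_on W (mix J)"
proof -
  have "continuous_on W (\<lambda>f. snd (f j) v)" for j v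
    by (rule continuous_on_product_then_coordinatewise[OF continuous_on_snd[OF continuous_on_evaluation]])
  moreover have "continuous_on W (\<lambda>f. fst (f j))" for j
    by (rule continuous_on_fst[OF continuous_on_evaluation])
  ultimately show ?thesis
    unfolding mix_def
    by (intro continuous_on_coordinatewise_then_product continuous_on_sum continuous_on_mult)
qed

lemma compact_mix_image:
  "\<forall>j\<in>J. compact (S j) \<Longrightarrow> compact (mix J ` weighted_selections J S)"
  by (intro compact_continuous_image continuous_on_mix compact_weighted_selections)

lemma mix_image_subset_dual_space:
  assumes "\<forall>j\<in>J. S j \<subseteq> dual_space"
  shows "mix J ` weighted_selections J S \<subseteq> dual_space"
proof
  fix \<phi> assume "\<phi> \<in> mix J ` weighted_selections J S"
  then obtain f where f: "f \<in> weighted_selections J S" "\<phi> = mix J f" by blast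
  then have "bounded_linear (snd (f j))" if "j \<in> J" for j
    using weighted_selections_memD(3)[OF f(1) that] assms that by (auto simp: dual_space_def)
  then show "\<phi> \<in> dual_space"
    unfolding f(2) mix_def dual_space_def
    by (auto intro!: bounded_linear_sum bounded_linear_const_mult)
qed

lemma mix_image_subset_co_gen:
  assumes "finite J"
  shows "mix J ` weighted_selections J S \<subseteq> co_gen (\<Union>j\<in>J. S j)"
proof
  fix \<phi> assume "\<phi> \<in> mix J ` weighted_selections J S"
  then obtain f where f: "f \<in> weighted_selections J S" "\<phi> = mix J f" by blast
  have sum1: "(\<Sum>j\<in>J. fst (f j)) = 1"
    using f(1) by (simp add: weighted_selections_def)
  define F where "F = (\<lambda>j. snd (f j)) ` J"
  define c where "c \<psi> = (\<Sum>j\<in>{j\<in>J. snd (f j) = \<psi>}. fst (f j))" for \<psi>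
  have "finite F" "F \<subseteq> (\<Union>j\<in>J. S j)" "F \<noteq> {}"
    using assms sum1 weighted_selections_memD(3)[OF f(1)] by (auto simp: F_def)
  moreover have "\<forall>\<psi>\<in>F. 0 \<le> c \<psi>"
    using weighted_selections_memD(1)[OF f(1)] by (auto simp: c_def intro!: sum_nonneg)
  moreover have "sum c F = 1"
    using sum.image_gen[OF assms, of "\<lambda>j. fst (f j)" "\<lambda>j. snd (f j)"] sum1
    by (simp add: c_def F_def)
  moreover have "\<phi> = (\<lambda>v. \<Sum>\<psi>\<in>F. c \<psi> * \<psi> v)"
  proof
    fix v
    have "\<phi> v = (\<Sum>\<psi>\<in>F. \<Sum>j\<in>{j\<in>J. snd (f j) = \<psi>}. fst (f j) * snd (f j) v)"
      unfolding f(2) mix_def F_def by (rule sum.image_gen[OF assms])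
    also have "\<dots> = (\<Sum>\<psi>\<in>F. c \<psi> * \<psi> v)"
      unfolding c_def sum_distrib_right by (intro sum.cong refl) auto
    finally show "\<phi> v = (\<Sum>\<psi>\<in>F. c \<psi> * \<psi> v)" .
  qed
  ultimately show "\<phi> \<in> co_gen (\<Union>j\<in>J. S j)"
    unfolding co_gen_def by blast
qed

lemma subset_mix_image:
  assumes "finite J" "j0 \<in> J" "\<forall>j\<in>J. S j \<noteq> {}"
  shows "S j0 \<subseteq> mix J ` weighted_selections J S"
proof
  fix a assume "a \<in> S j0"
  define f where "f j = (if j = j0 then (1::real, a) else if j \<in> J then (0, SOME b. b \<in> S j)
    else (0, \<lambda>v. 0))" for j
  have "(SOME b. b \<in> S j) \<in> S j" if "j \<in> J" for j
    using assms(3) that by (simp add: some_in_eq)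
  then have "f \<in> weighted_selections J S"
    using assms(1,2) \<open>a \<in> S j0\<close>
    by (auto simp: weighted_selections_def f_def if_distrib[of fst] sum.delta cong: if_cong)
  moreover have "mix J f = a"
  proof
    fix v
    have "mix J f v = (\<Sum>j\<in>J. if j = j0 then a v else 0)"
      unfolding mix_def by (intro sum.cong) (auto simp: f_def)
    then show "mix J f v = a v" using assms(1,2) by simp
  qed
  ultimately show "a \<in> mix J ` weighted_selections J S"
    by (intro image_eqI[where x=f]) simp_all
qed

lemma pointwise_convex_mix_image:
  assumes "\<forall>j\<in>J. pointwise_convex (S j)"
  shows "pointwise_convex (mix J ` weighted_selections J S)"
  unfolding pointwise_convex_def
proof (intro ballI allI impI)
  fix \<phi> \<psi> and t :: real
  assume "\<phi> \<in> mix J ` weighted_selections J S" "\<psi> \<in> mix J ` weighted_selections J S"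
    and t: "0 \<le> t \<and> t \<le> 1"
  then obtain f g where f: "f \<in> weighted_selections J S" "\<phi> = mix J f"
    and g: "g \<in> weighted_selections J S" "\<psi> = mix J g"
    by blast
  define \<nu> where "\<nu> j = t * fst (f j) + (1 - t) * fst (g j)" for j
  have "\<exists>c\<in>S j. \<forall>v. t * fst (f j) * snd (f j) v + (1 - t) * fst (g j) * snd (g j) v
      = \<nu> j * c v" if "j \<in> J" for j
    using pointwise_convex_reweight[OF assms[rule_format, OF that]
        weighted_selections_memD(3)[OF f(1) that] weighted_selections_memD(3)[OF g(1) that],
        of "t * fst (f j)" "(1 - t) * fst (g j)"]
      weighted_selections_memD(1)[OF f(1) that] weighted_selections_memD(1)[OF g(1) that] t
    by (simp add: \<nu>_def mult.assoc)
  then obtain c where c: "\<forall>j\<in>J. c j \<in> S j \<and> (\<forall>v. t * fst (f j) * snd (f j) v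
      + (1 - t) * fst (g j) * snd (g j) v = \<nu> j * c j v)"
    using bchoice[of J "\<lambda>j c. c \<in> S j \<and> (\<forall>v. t * fst (f j) * snd (f j) v
      + (1 - t) * fst (g j) * snd (g j) v = \<nu> j * c v)"] by blast
  define h where "h j = (if j \<in> J then (\<nu> j, c j) else (0, \<lambda>v. 0))" for j
  have "0 \<le> \<nu> j \<and> \<nu> j \<le> 1" if "j \<in> J" for j
    using weighted_selections_memD(1,2)[OF f(1) that] weighted_selections_memD(1,2)[OF g(1) that] t
      convex_bound_le[of "fst (f j)" 1 "fst (g j)" t "1 - t"]
    by (simp add: \<nu>_def)
  moreover have "(\<Sum>j\<in>J. \<nu> j) = 1"
    using weighted_selections_sum[OF f(1)] weighted_selections_sum[OF g(1)]
    by (simp add: \<nu>_def sum.distrib flip: sum_distrib_left)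
  ultimately have "h \<in> weighted_selections J S"
    using c by (simp add: weighted_selections_def h_def)
  moreover have "mix J h = (\<lambda>v. t * \<phi> v + (1 - t) * \<psi> v)"
  proof
    fix v
    have "mix J h v = (\<Sum>j\<in>J. t * fst (f j) * snd (f j) v + (1 - t) * fst (g j) * snd (g j) v)"
      unfolding mix_def using c by (intro sum.cong) (simp_all add: h_def)
    then show "mix J h v = t * \<phi> v + (1 - t) * \<psi> v"
      by (simp add: f(2) g(2) mix_def sum.distrib sum_distrib_left mult.assoc)
  qed
  ultimately show "(\<lambda>v. t * \<phi> v + (1 - t) * \<psi> v) \<in> mix J ` weighted_selections J S"
    by (intro image_eqI[where x=h]) simp_all
qed

lemma wstar_convex_compact_mix_image:
  assumes "finite J" "\<forall>j\<in>J. wstar_convex_compact (S j) \<and> S j \<noteq> {}"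
  shows "wstar_convex_compact (mix J ` weighted_selections J S)"
    and "mix J ` weighted_selections J S \<subseteq> co_gen (\<Union>j\<in>J. S j)"
    and "\<And>j. j \<in> J \<Longrightarrow> S j \<subseteq> mix J ` weighted_selections J S"
  using assms
  by (simp_all add: wstar_convex_compact_iff mix_image_subset_dual_space compact_mix_image
      pointwise_convex_mix_image mix_image_subset_co_gen subset_mix_image)

section \<open>Separation conditions versus disjointness from cones\<close>

lemma disjoint_wstar_closure_cone_iff:
  assumes "wstar_convex_compact P" "P \<noteq> {}" "G \<subseteq> dual_space"
  shows "P \<inter> wstar_closure (cone_gen G) = {} \<longleftrightarrow>
    (\<exists>v. support_fun P v < 0 \<and> (\<forall>\<psi>\<in>G. 0 \<le> \<psi> v))"
proof -
  have P: "P \<subseteq> dual_space" "compact P" "pointwise_convex P"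
    using assms(1) by (simp_all add: wstar_convex_compact_iff)
  have lin: "\<forall>\<phi>\<in>P. linear \<phi>" "\<forall>\<psi>\<in>G. linear \<psi>"
    using P(1) assms(3) by (auto simp: dual_space_def bounded_linear.linear)
  have "P \<inter> wstar_closure (cone_gen G) = {} \<longleftrightarrow> P \<inter> closure (cone_gen G) = {}"
    using P(1) by (auto simp: wstar_closure_def)
  also have "\<dots> \<longleftrightarrow> (\<exists>v. (\<forall>\<phi>\<in>P. \<phi> v < 0) \<and> (\<forall>\<psi>\<in>G. 0 \<le> \<psi> v))"
  proof
    assume "P \<inter> closure (cone_gen G) = {}"
    then show "\<exists>v. (\<forall>\<phi>\<in>P. \<phi> v < 0) \<and> (\<forall>\<psi>\<in>G. 0 \<le> \<psi> v)"
      by (rule exists_vector_negative_on_compact_nonneg_on_generators[OF P(2,3) lin])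
  next
    assume "\<exists>v. (\<forall>\<phi>\<in>P. \<phi> v < 0) \<and> (\<forall>\<psi>\<in>G. 0 \<le> \<psi> v)"
    then obtain v where v: "\<forall>\<phi>\<in>P. \<phi> v < 0" "\<forall>\<psi>\<in>G. 0 \<le> \<psi> v" by blast
    show "P \<inter> closure (cone_gen G) = {}"
    proof (intro equals0I)
      fix \<phi> assume "\<phi> \<in> P \<inter> closure (cone_gen G)"
      then have "\<phi> v < 0" "0 \<le> \<phi> v"
        using v(1) closure_cone_gen_nonneg[OF v(2)] by auto
      then show False by simp
    qed
  qed
  finally show ?thesis
    using support_fun_less_iff[OF P(2) assms(2)] by simp
qed

lemma co_gen_disjoint_wstar_closure_cone_iff:
  assumes "finite J" "\<forall>j\<in>J. wstar_convex_compact (S j) \<and> S j \<noteq> {}" "G \<subseteq> dual_space"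
  shows "co_gen (\<Union>j\<in>J. S j) \<inter> wstar_closure (cone_gen G) = {} \<longleftrightarrow>
    (\<exists>v. (\<forall>j\<in>J. support_fun (S j) v < 0) \<and> (\<forall>\<psi>\<in>G. 0 \<le> \<psi> v))"
proof -
  define K where "K = mix J ` weighted_selections J S"
  have K: "wstar_convex_compact K" "K \<subseteq> co_gen (\<Union>j\<in>J. S j)" "\<And>j. j \<in> J \<Longrightarrow> S j \<subseteq> K"
    unfolding K_def by (rule wstar_convex_compact_mix_image[OF assms(1,2)])+
  have neg_iff: "support_fun (S j) v < 0 \<longleftrightarrow> (\<forall>\<phi>\<in>S j. \<phi> v < 0)" if "j \<in> J" for j v
    using assms(2) that by (intro support_fun_less_iff) (simp_all add: wstar_convex_compact_iff)
  show ?thesis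
  proof
    assume "co_gen (\<Union>j\<in>J. S j) \<inter> wstar_closure (cone_gen G) = {}"
    then have "K \<inter> closure (cone_gen G) = {}"
      using K(1,2) by (auto simp: wstar_closure_def wstar_convex_compact_iff)
    moreover have "compact K" "pointwise_convex K" "\<forall>\<phi>\<in>K. linear \<phi>" "\<forall>\<psi>\<in>G. linear \<psi>"
      using K(1) assms(3) by (auto simp: wstar_convex_compact_iff dual_space_def bounded_linear.linear)
    ultimately obtain v where "\<forall>\<phi>\<in>K. \<phi> v < 0" "\<forall>\<psi>\<in>G. 0 \<le> \<psi> v"
      using exists_vector_negative_on_compact_nonneg_on_generators by blast
    then show "\<exists>v. (\<forall>j\<in>J. support_fun (S j) v < 0) \<and> (\<forall>\<psi>\<in>G. 0 \<le> \<psi> v)"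
      using K(3) by (intro exI[of _ v]) (auto simp: neg_iff)
  next
    assume "\<exists>v. (\<forall>j\<in>J. support_fun (S j) v < 0) \<and> (\<forall>\<psi>\<in>G. 0 \<le> \<psi> v)"
    then obtain v where v: "\<forall>j\<in>J. support_fun (S j) v < 0" "\<forall>\<psi>\<in>G. 0 \<le> \<psi> v" by blast
    then have "\<forall>\<psi>\<in>(\<Union>j\<in>J. S j). \<psi> v < 0" by (auto simp: neg_iff)
    show "co_gen (\<Union>j\<in>J. S j) \<inter> wstar_closure (cone_gen G) = {}"
    proof (intro equals0I)
      fix \<phi> assume "\<phi> \<in> co_gen (\<Union>j\<in>J. S j) \<inter> wstar_closure (cone_gen G)"
      then have "\<phi> v < 0" "0 \<le> \<phi> v"
        using co_gen_negative[OF \<open>\<forall>\<psi>\<in>(\<Union>j\<in>J. S j). \<psi> v < 0\<close>] closure_cone_gen_nonneg[OF v(2)]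
        by (auto simp: wstar_closure_def)
      then show False by simp
    qed
  qed
qed

lemma Un_disjoint_wstar_closure_cone_iff:
  assumes "wstar_convex_compact P" "P \<noteq> {}" "wstar_convex_compact Q" "Q \<noteq> {}" "G \<subseteq> dual_space"
  shows "(P \<union> Q) \<inter> wstar_closure (cone_gen G) = {} \<longleftrightarrow>
    (\<exists>v. support_fun P v < 0 \<and> (\<forall>\<psi>\<in>G. 0 \<le> \<psi> v)) \<and> (\<exists>w. support_fun Q w < 0 \<and> (\<forall>\<psi>\<in>G. 0 \<le> \<psi> w))"
  unfolding Int_Un_distrib2 Un_empty
  by (simp only: disjoint_wstar_closure_cone_iff[OF assms(1,2,5)]
      disjoint_wstar_closure_cone_iff[OF assms(3,4,5)])

lemma separation_conditions_iff_disjoint_cones: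
  fixes A B :: "'i \<Rightarrow> ('a::real_normed_vector \<Rightarrow> real) set" and S :: "'j \<Rightarrow> ('a \<Rightarrow> real) set"
  assumes AB: "\<forall>i\<in>I. wstar_convex_compact (A i) \<and> A i \<noteq> {} \<and> wstar_convex_compact (B i) \<and> B i \<noteq> {}"
    and "finite J" and S: "\<forall>j\<in>J. wstar_convex_compact (S j) \<and> S j \<noteq> {}"
  shows "((\<forall>i\<in>I. \<exists>v. support_fun (A i) v < 0 \<and>
              (\<forall>k\<in>I. k \<noteq> i \<longrightarrow> support_fun (A k) v \<le> 0 \<and> support_fun (B k) v \<le> 0)) \<and>
          (\<forall>i\<in>I. \<exists>w. support_fun (B i) w < 0 \<and>
              (\<forall>k\<in>I. k \<noteq> i \<longrightarrow> support_fun (B k) w \<le> 0 \<and> support_fun (A k) w \<le> 0)) \<and>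
          (\<exists>v0. (\<forall>j\<in>J. support_fun (S j) v0 < 0) \<and>
              (\<forall>i\<in>I. support_fun (A i) v0 \<le> 0 \<and> support_fun (B i) v0 \<le> 0)))
     \<longleftrightarrow>
         ((\<forall>i\<in>I. (A i \<union> B i) \<inter> wstar_closure (cone_gen (\<Union>k\<in>I - {i}. neg_set (A k \<union> B k))) = {}) \<and>
          co_gen (\<Union>j\<in>J. S j) \<inter> wstar_closure (cone_gen (\<Union>i\<in>I. neg_set (A i \<union> B i))) = {})"
proof -
  have G_dual: "(\<Union>k\<in>K. neg_set (A k \<union> B k)) \<subseteq> dual_space" if "K \<subseteq> I" for K
  proof (intro UN_least neg_set_subset_dual_space)
    fix k assume "k \<in> K"
    then have "k \<in> I" using that by blast
    then show "A k \<union> B k \<subseteq> dual_space"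
      using AB by (simp add: wstar_convex_compact_iff)
  qed
  have G_nonneg: "(\<forall>\<psi>\<in>(\<Union>k\<in>K. neg_set (A k \<union> B k)). 0 \<le> \<psi> v) \<longleftrightarrow>
      (\<forall>k\<in>K. support_fun (A k) v \<le> 0 \<and> support_fun (B k) v \<le> 0)" if "K \<subseteq> I" for K v
    using AB that by (intro nonneg_on_neg_sets_iff) (auto simp: wstar_convex_compact_iff)
  have "(A i \<union> B i) \<inter> wstar_closure (cone_gen (\<Union>k\<in>I - {i}. neg_set (A k \<union> B k))) = {} \<longleftrightarrow>
      (\<exists>v. support_fun (A i) v < 0 \<and>
         (\<forall>k\<in>I. k \<noteq> i \<longrightarrow> support_fun (A k) v \<le> 0 \<and> support_fun (B k) v \<le> 0)) \<and>
      (\<exists>w. support_fun (B i) w < 0 \<and>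
         (\<forall>k\<in>I. k \<noteq> i \<longrightarrow> support_fun (B k) w \<le> 0 \<and> support_fun (A k) w \<le> 0))"
    if "i \<in> I" for i
  proof -
    have P: "wstar_convex_compact (A i)" "A i \<noteq> {}" "wstar_convex_compact (B i)" "B i \<noteq> {}"
      using AB that by simp_all
    have "I - {i} \<subseteq> I" by blast
    show ?thesis
      unfolding Un_disjoint_wstar_closure_cone_iff[OF P G_dual[OF \<open>I - {i} \<subseteq> I\<close>]]
        G_nonneg[OF \<open>I - {i} \<subseteq> I\<close>]
      by blast
  qed
  moreover have "co_gen (\<Union>j\<in>J. S j) \<inter> wstar_closure (cone_gen (\<Union>i\<in>I. neg_set (A i \<union> B i))) = {}
      \<longleftrightarrow> (\<exists>v0. (\<forall>j\<in>J. support_fun (S j) v0 < 0) \<and>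
            (\<forall>i\<in>I. support_fun (A i) v0 \<le> 0 \<and> support_fun (B i) v0 \<le> 0))"
    unfolding co_gen_disjoint_wstar_closure_cone_iff[OF \<open>finite J\<close> S G_dual[OF order_refl]]
      G_nonneg[OF order_refl] ..
  ultimately show ?thesis by blast
qed

theorem proposition1:
  fixes f g :: "nat \<Rightarrow> 'a::banach \<Rightarrow> real"
    and m l :: nat
    and xbar :: 'a
    and Dlf Duf Dlg Dug :: "nat \<Rightarrow> ('a \<Rightarrow> real) set"
    and xs ys zs :: "nat \<Rightarrow> ('a \<Rightarrow> real)"
  defines "M \<equiv> {x. (\<forall>i\<in>{1..m}. f i x = 0) \<and> (\<forall>j\<in>{1..l}. g j x \<le> 0)}"
    and "Jx \<equiv> {j\<in>{1..l}. g j xbar = 0}"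
    and "A \<equiv> (\<lambda>i. shift_set (Dlf i) (ys i))"
    and "B \<equiv> (\<lambda>i. neg_shift_set (xs i) (Duf i))"
    and "C \<equiv> (\<lambda>i. shift_set (Dlf i) (ys i) \<union> neg_shift_set (xs i) (Duf i))"
  assumes xbar_M: "xbar \<in> M"
    and qf: "\<forall>i\<in>{1..m}. quasidifferentiable_with (f i) xbar (Dlf i) (Duf i)"
    and qg: "\<forall>j\<in>Jx. quasidifferentiable_with (g j) xbar (Dlg j) (Dug j)"
    and xs_in: "\<forall>i\<in>{1..m}. xs i \<in> Dlf i"
    and ys_in: "\<forall>i\<in>{1..m}. ys i \<in> Duf i"
    and zs_in: "\<forall>j\<in>Jx. zs j \<in> Dug j"
  shows "((\<forall>i\<in>{1..m}. \<exists>v. support_fun (A i) v < 0 \<and>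
              (\<forall>k\<in>{1..m}. k \<noteq> i \<longrightarrow> support_fun (A k) v \<le> 0 \<and> support_fun (B k) v \<le> 0)) \<and>
          (\<forall>i\<in>{1..m}. \<exists>w. support_fun (B i) w < 0 \<and>
              (\<forall>k\<in>{1..m}. k \<noteq> i \<longrightarrow> support_fun (B k) w \<le> 0 \<and> support_fun (A k) w \<le> 0)) \<and>
          (\<exists>v0. (\<forall>j\<in>Jx. support_fun (shift_set (Dlg j) (zs j)) v0 < 0) \<and>
              (\<forall>i\<in>{1..m}. support_fun (A i) v0 \<le> 0 \<and> support_fun (B i) v0 \<le> 0)))
     \<longleftrightarrow>
         ((\<forall>i\<in>{1..m}. C i \<inter> wstar_closure (cone_gen (\<Union>k\<in>{1..m} - {i}. neg_set (C k))) = {}) \<and>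
          co_gen (\<Union>j\<in>Jx. shift_set (Dlg j) (zs j))
            \<inter> wstar_closure (cone_gen (\<Union>i\<in>{1..m}. neg_set (C i))) = {})"
proof -
  have "\<forall>i\<in>{1..m}. wstar_convex_compact (A i) \<and> A i \<noteq> {} \<and> wstar_convex_compact (B i) \<and> B i \<noteq> {}"
    using wstar_convex_compact_shift_set_quasidifferential[OF bspec[OF qf] bspec[OF ys_in]]
      wstar_convex_compact_neg_shift_set_quasidifferential[OF bspec[OF qf] bspec[OF xs_in]]
    by (simp add: A_def B_def)
  moreover have "finite Jx"
    by (simp add: Jx_def)
  moreover have "\<forall>j\<in>Jx. wstar_convex_compact (shift_set (Dlg j) (zs j)) \<and> shift_set (Dlg j) (zs j) \<noteq> {}"
    using wstar_convex_compact_shift_set_quasidifferential[OF bspec[OF qg] bspec[OF zs_in]] by simp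
  moreover have "C = (\<lambda>i. A i \<union> B i)"
    by (simp add: A_def B_def C_def)
  ultimately show ?thesis
    using separation_conditions_iff_disjoint_cones by simp
qed

end
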